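(* Let $P$ be an instance of $k$-means clustering with $z$ outliers, $\delta\in(0,1)$, and let $S$ be a finite nonempty multiset of points of $P$ such that $|S\cap C^*_j|\ge(1-\delta)\frac{|C^*_j|}{n}|S|$ for every $1\le j\le k$. Let $S_{opt}=S\cap P_{opt}$. Then for any finite set $H\subset\mathbb{R}^D$, $Cost(\tilde P_{opt},H)\le\frac{1}{1-\delta}\frac{n}{|S|}Cost(\tilde S_{opt},H)$.
   Context: $P\subset\mathbb{R}^D$, $|P|=n$, $0<z<n$. $dist(p,H)=\min_{q\in H}\|p-q\|$; $Cost(X,Y)=\sum_{q\in X}dist(q,Y)^2$ (with multiplicity). $P_{opt}\subset P$ with $|P_{opt}|=n-z$ is the set of inliers of an optimal solution of $k$-means with $z$ outliers, $C^*_1,\dots,C^*_k$ the optimal clusters forming $P_{opt}$, $o^*_j$ the mean of $C^*_j$. Star shaped transformation: for $p\in C^*_j$, $\tilde p=o^*_j$; for $U\subseteq P_{opt}$ (multiset), $\tilde U=\{\tilde p:p\in U\}$ as a multiset. *)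

theory Defs
  imports "HOL-Analysis.Analysis" "HOL-Library.Multiset"
begin

text \<open>Points live in an arbitrary Euclidean space 'a (playing the role of R^D).
  dist(p,H) is infdist p H (the minimum distance for finite nonempty H).\<close>

definition Cost :: "'a::euclidean_space multiset \<Rightarrow> 'a set \<Rightarrow> real" where
  "Cost X H = (\<Sum>q\<in>#X. (infdist q H)^2)"

definition mean :: "'a::euclidean_space set \<Rightarrow> 'a" where
  "mean C = (1 / real (card C)) *\<^sub>R (\<Sum>p\<in>C. p)"

definition set_cost :: "'a::euclidean_space set \<Rightarrow> 'a set \<Rightarrow> real" where
  "set_cost Q X = (\<Sum>q\<in>Q. (infdist q X)^2)"

text \<open>Popt together with clusters C 1, ..., C k is the inlier set / clustering of an optimal
  solution of k-means with z outliers on P: Popt has n - z points of P, it is partitioned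
  into the clusters, each cluster consists of points assigned to a nearest center c j
  of a center set of size at most k, and this solution has minimum cost among all choices
  of n - z inliers and at most k centers.\<close>
definition opt_kmeans_outliers ::
  "'a::euclidean_space set \<Rightarrow> nat \<Rightarrow> nat \<Rightarrow> 'a set \<Rightarrow> (nat \<Rightarrow> 'a set) \<Rightarrow> bool" where
  "opt_kmeans_outliers P k z Popt C \<longleftrightarrow>
     Popt \<subseteq> P \<and> card Popt = card P - z \<and>
     (\<Union>j\<in>{1..k}. C j) = Popt \<and>
     (\<forall>i\<in>{1..k}. \<forall>j\<in>{1..k}. i \<noteq> j \<longrightarrow> C i \<inter> C j = {}) \<and>
     (\<exists>c::nat \<Rightarrow> 'a.
        (\<forall>j\<in>{1..k}. \<forall>p\<in>C j. dist p (c j) = infdist p (c ` {1..k})) \<and>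
        (\<forall>Q X. Q \<subseteq> P \<longrightarrow> card Q = card P - z \<longrightarrow> finite X \<longrightarrow> X \<noteq> {} \<longrightarrow> card X \<le> k \<longrightarrow>
             set_cost Popt (c ` {1..k}) \<le> set_cost Q X))"

definition star :: "nat \<Rightarrow> (nat \<Rightarrow> 'a::euclidean_space set) \<Rightarrow> 'a \<Rightarrow> 'a" where
  "star k C p = mean (C (THE j. j \<in> {1..k} \<and> p \<in> C j))"

end

theory Submission
  imports Defs
begin

text \<open>Under the star transformation every point of the optimal cluster \<open>C\<^sup>*\<^sub>j\<close> sits at the
  cluster mean, so the cost of any multiset of inliers is a sum over clusters of
  (number of points in the cluster) times (squared distance of its mean to \<open>H\<close>).
  The whole of \<open>P\<^sub>o\<^sub>p\<^sub>t\<close> has \<open>|C\<^sup>*\<^sub>j|\<close> points in cluster \<open>j\<close>, while by hypothesis \<open>S\<^sub>o\<^sub>p\<^sub>t\<close> has at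
  least \<open>(1 - \<delta>) |C\<^sup>*\<^sub>j| |S| / n\<close> of them; comparing the two sums term by term gives the bound.\<close>

lemma sum_mset_clusterwise:
  fixes g :: "'a \<Rightarrow> 'b::comm_semiring_1"
  assumes "finite J"
    and disjoint: "\<And>i j. i \<in> J \<Longrightarrow> j \<in> J \<Longrightarrow> i \<noteq> j \<Longrightarrow> C i \<inter> C j = {}"
    and const_on_clusters: "\<And>j p. j \<in> J \<Longrightarrow> p \<in> C j \<Longrightarrow> g p = v j"
    and "set_mset M \<subseteq> (\<Union>j\<in>J. C j)"
  shows "(\<Sum>p\<in>#M. g p) = (\<Sum>j\<in>J. of_nat (size (filter_mset (\<lambda>p. p \<in> C j) M)) * v j)"
  using assms(4)
proof (induction M)
  case empty
  then show ?case by simp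
next
  case (add x M)
  then obtain j0 where j0: "j0 \<in> J" "x \<in> C j0" by auto
  have "(if x \<in> C j then v j else 0) = (if j = j0 then v j else 0)" if "j \<in> J" for j
    using disjoint[OF that j0(1)] j0(2) by auto
  then have "(\<Sum>j\<in>J. if x \<in> C j then v j else 0) = g x"
    using \<open>finite J\<close> j0 const_on_clusters by (simp add: sum.delta)
  moreover have "(\<Sum>p\<in>#M. g p) = (\<Sum>j\<in>J. of_nat (size (filter_mset (\<lambda>p. p \<in> C j) M)) * v j)"
    using add by simp
  moreover have "of_nat (size (filter_mset (\<lambda>p. p \<in> C j) (add_mset x M))) * v j
      = (if x \<in> C j then v j else 0) + of_nat (size (filter_mset (\<lambda>p. p \<in> C j) M)) * v j" for j
    by (simp add: algebra_simps)
  ultimately show ?case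
    by (simp add: sum.distrib)
qed

corollary Cost_image_mset_clusterwise:
  assumes "finite J"
    and "\<And>i j. i \<in> J \<Longrightarrow> j \<in> J \<Longrightarrow> i \<noteq> j \<Longrightarrow> C i \<inter> C j = {}"
    and "\<And>j p. j \<in> J \<Longrightarrow> p \<in> C j \<Longrightarrow> f p = c j"
    and "set_mset M \<subseteq> (\<Union>j\<in>J. C j)"
  shows "Cost (image_mset f M) H
     = (\<Sum>j\<in>J. real (size (filter_mset (\<lambda>p. p \<in> C j) M)) * infdist (c j) H ^ 2)"
  unfolding Cost_def image_mset.compositionality o_def
  using sum_mset_clusterwise[of J C "\<lambda>p. infdist (f p) H ^ 2" "\<lambda>j. infdist (c j) H ^ 2"] assms
  by simp

lemma star_eq_mean:
  assumes "\<And>i j. i \<in> {1..k} \<Longrightarrow> j \<in> {1..k} \<Longrightarrow> i \<noteq> j \<Longrightarrow> C i \<inter> C j = {}"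
    and "j \<in> {1..k}" and "p \<in> C j"
  shows "star k C p = mean (C j)"
proof -
  have "(THE i. i \<in> {1..k} \<and> p \<in> C i) = j"
    using assms by (intro the_equality) blast+
  then show ?thesis by (simp add: star_def)
qed

lemma Cost_star_clusterwise:
  assumes disjoint: "\<And>i j. i \<in> {1..k} \<Longrightarrow> j \<in> {1..k} \<Longrightarrow> i \<noteq> j \<Longrightarrow> C i \<inter> C j = {}"
    and "set_mset M \<subseteq> (\<Union>j\<in>{1..k}. C j)"
  shows "Cost (image_mset (star k C) M) H
     = (\<Sum>j\<in>{1..k}. real (size (filter_mset (\<lambda>p. p \<in> C j) M)) * infdist (mean (C j)) H ^ 2)"
  using assms star_eq_mean[OF disjoint] by (intro Cost_image_mset_clusterwise) auto

lemma le_scaled_by_sample_fraction: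
  fixes \<delta> n s c m :: real
  assumes "(1 - \<delta>) * (c / n) * s \<le> m" and "\<delta> < 1" and "0 < n" and "0 < s"
  shows "c \<le> (1 / (1 - \<delta>)) * (n / s) * m"
proof -
  have "c = (1 / (1 - \<delta>)) * (n / s) * ((1 - \<delta>) * (c / n) * s)"
    using assms(2-4) by (simp add: field_simps)
  also have "\<dots> \<le> (1 / (1 - \<delta>)) * (n / s) * m"
    using assms by (intro mult_left_mono) auto
  finally show ?thesis .
qed

theorem lemma7:
  fixes P :: "'a::euclidean_space set" and k z :: nat and Popt :: "'a set"
    and C :: "nat \<Rightarrow> 'a set" and \<delta> :: real and S :: "'a multiset" and H :: "'a set"
  assumes "finite P" and "0 < z" and "z < card P" and "1 \<le> k"
    and "opt_kmeans_outliers P k z Popt C"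
    and "0 < \<delta>" and "\<delta> < 1"
    and "S \<noteq> {#}" and "set_mset S \<subseteq> P"
    and "\<forall>j\<in>{1..k}. real (size (filter_mset (\<lambda>p. p \<in> C j) S))
            \<ge> (1 - \<delta>) * (real (card (C j)) / real (card P)) * real (size S)"
    and "finite H"
  shows "Cost (image_mset (star k C) (mset_set Popt)) H
     \<le> (1 / (1 - \<delta>)) * (real (card P) / real (size S))
        * Cost (image_mset (star k C) (filter_mset (\<lambda>p. p \<in> Popt) S)) H"
proof -
  have Popt: "Popt \<subseteq> P" "(\<Union>j\<in>{1..k}. C j) = Popt"
    and disjoint: "\<And>i j. i \<in> {1..k} \<Longrightarrow> j \<in> {1..k} \<Longrightarrow> i \<noteq> j \<Longrightarrow> C i \<inter> C j = {}"
    using assms(5) unfolding opt_kmeans_outliers_def by auto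
  have "finite Popt" using Popt(1) assms(1) finite_subset by blast
  define w where "w j = infdist (mean (C j)) H ^ 2" for j
  define count_S where "count_S j = real (size (filter_mset (\<lambda>p. p \<in> C j) S))" for j
  define factor where "factor = (1 / (1 - \<delta>)) * (real (card P) / real (size S))"
  have clusterwise: "Cost (image_mset (star k C) M) H
      = (\<Sum>j\<in>{1..k}. real (size (filter_mset (\<lambda>p. p \<in> C j) M)) * w j)"
    if "set_mset M \<subseteq> Popt" for M
    unfolding w_def using that Popt(2) by (intro Cost_star_clusterwise[OF disjoint]) auto
  have "Cost (image_mset (star k C) (mset_set Popt)) H = (\<Sum>j\<in>{1..k}. real (card (C j)) * w j)"
  proof -
    have "{p \<in> Popt. p \<in> C j} = C j" if "j \<in> {1..k}" for j
      using that Popt(2) by blast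
    then show ?thesis
      using \<open>finite Popt\<close> by (subst clusterwise) auto
  qed
  also have "\<dots> \<le> (\<Sum>j\<in>{1..k}. factor * count_S j * w j)"
    unfolding factor_def count_S_def
    using assms(3,7,8,10)
    by (intro sum_mono mult_right_mono le_scaled_by_sample_fraction)
      (auto simp: w_def nonempty_has_size)
  also have "\<dots> = factor * Cost (image_mset (star k C) (filter_mset (\<lambda>p. p \<in> Popt) S)) H"
  proof -
    have "filter_mset (\<lambda>p. p \<in> C j) (filter_mset (\<lambda>p. p \<in> Popt) S)
        = filter_mset (\<lambda>p. p \<in> C j) S" if "j \<in> {1..k}" for j
      using that Popt(2) unfolding filter_filter_mset by (intro filter_mset_cong) auto
    then show ?thesis
      by (subst clusterwise) (auto simp: count_S_def sum_distrib_left mult.assoc)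
  qed
  finally show ?thesis unfolding factor_def .
qed

end
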